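(* Let $\mathbb{K}$ be an algebraically closed field of characteristic $p\geq 3$ and $L$ a nilpotent Lie superalgebra over $\mathbb{K}$ of total dimension $3$. Then $L$ is isomorphic to one of the following (basis listed as even $|$ odd, only nonzero brackets listed up to super antisymmetry): $\mathrm{sdim}=(0|3)$: $L^1_{0|3}=\langle\,|e_1,e_2,e_3\rangle$ abelian. $\mathrm{sdim}=(1|2)$, basis $e_1|e_2,e_3$: $L^1_{1|2}$ abelian; $L^2_{1|2}$: $[e_2,e_3]=e_1$; $L^3_{1|2}$: $[e_1,e_2]=e_3$; $L^4_{1|2}$: $[e_3,e_3]=e_1$. $\mathrm{sdim}=(2|1)$, basis $e_1,e_2|e_3$: $L^1_{2|1}$ abelian; $L^2_{2|1}$: $[e_3,e_3]=e_2$. $\mathrm{sdim}=(3|0)$, basis $e_1,e_2,e_3$: $L^1_{3|0}$ abelian; $L^2_{3|0}$: $[e_1,e_2]=e_3$.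
   Context: A Lie superalgebra $L=L_{\bar0}\oplus L_{\bar1}$ over a field of characteristic $p>2$ has a super antisymmetric bracket satisfying the super Jacobi identity and, additionally, $[x,[x,x]]=0$ for all $x\in L_{\bar1}$. $\mathrm{sdim}(L)=(\dim L_{\bar0}|\dim L_{\bar1})$. $L$ is nilpotent if the series $C^0(L)=L$, $C^{k+1}(L)=[C^k(L),L]$ reaches $0$. *)

theory Defs
  imports Main "HOL-Computational_Algebra.Polynomial"
begin

definition alg_closed :: "'a::field itself \<Rightarrow> bool" where
  "alg_closed _ \<longleftrightarrow> (\<forall>q::'a poly. degree q > 0 \<longrightarrow> (\<exists>x. poly q x = 0))"

(* Graded pieces: False = even part, True = odd part. *)
definition gpart :: "'v set \<Rightarrow> 'v set \<Rightarrow> bool \<Rightarrow> 'v set" where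
  "gpart L0 L1 d = (if d then L1 else L0)"

definition ssign :: "bool \<Rightarrow> bool \<Rightarrow> 'a::ring_1" where
  "ssign d e = (if d \<and> e then -1 else 1)"

(* A Lie superalgebra structure on the whole vector space 'v over the field 'a
   (scalar multiplication scale), with grading L = L0 \<oplus> L1 and bracket br. *)
definition lie_superalgebra ::
  "('a::field \<Rightarrow> 'v::ab_group_add \<Rightarrow> 'v) \<Rightarrow> 'v set \<Rightarrow> 'v set \<Rightarrow> ('v \<Rightarrow> 'v \<Rightarrow> 'v) \<Rightarrow> bool" where
  "lie_superalgebra scale L0 L1 br \<longleftrightarrow>
     vector_space scale \<and>
     module.subspace scale L0 \<and> module.subspace scale L1 \<and>
     L0 \<inter> L1 = {0} \<and> (\<forall>v. \<exists>a\<in>L0. \<exists>b\<in>L1. v = a + b) \<and>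
     (\<forall>x y z. br (x + y) z = br x z + br y z) \<and>
     (\<forall>x y z. br x (y + z) = br x y + br x z) \<and>
     (\<forall>c x y. br (scale c x) y = scale c (br x y)) \<and>
     (\<forall>c x y. br x (scale c y) = scale c (br x y)) \<and>
     (\<forall>d e x y. x \<in> gpart L0 L1 d \<longrightarrow> y \<in> gpart L0 L1 e \<longrightarrow>
        br x y \<in> gpart L0 L1 (d \<noteq> e)) \<and>
     (\<forall>d e x y. x \<in> gpart L0 L1 d \<longrightarrow> y \<in> gpart L0 L1 e \<longrightarrow>
        br x y = - scale (ssign d e) (br y x)) \<and>
     (\<forall>d e x y z. x \<in> gpart L0 L1 d \<longrightarrow> y \<in> gpart L0 L1 e \<longrightarrow>
        br x (br y z) = br (br x y) z + scale (ssign d e) (br y (br x z))) \<and>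
     (\<forall>x\<in>L1. br x (br x x) = 0)"

fun lcs :: "('a::field \<Rightarrow> 'v::ab_group_add \<Rightarrow> 'v) \<Rightarrow> ('v \<Rightarrow> 'v \<Rightarrow> 'v) \<Rightarrow> nat \<Rightarrow> 'v set" where
  "lcs scale br 0 = UNIV"
| "lcs scale br (Suc k) = module.span scale {br x y | x y. x \<in> lcs scale br k}"

definition nilpotent_lsa :: "('a::field \<Rightarrow> 'v::ab_group_add \<Rightarrow> 'v) \<Rightarrow> ('v \<Rightarrow> 'v \<Rightarrow> 'v) \<Rightarrow> bool" where
  "nilpotent_lsa scale br \<longleftrightarrow> (\<exists>k. lcs scale br k = {0})"

definition total_dim :: "('a::field \<Rightarrow> 'v::ab_group_add \<Rightarrow> 'v) \<Rightarrow> nat \<Rightarrow> bool" where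
  "total_dim scale n \<longleftrightarrow> (\<exists>B. finite B \<and> card B = n \<and> module.independent scale B \<and>
                                module.span scale B = UNIV)"

(* L is isomorphic to the model Lie superalgebra with homogeneous basis e_1,e_2,e_3,
   e_i of parity par i (True = odd), and structure constants c: [e_i,e_j] = sum_k c i j k e_k
   for i <= j (the remaining brackets are determined by super antisymmetry).
   Such an isomorphism is the same thing as a homogeneous basis of L with this
   multiplication table. *)
definition iso_model ::
  "('a::field \<Rightarrow> 'v::ab_group_add \<Rightarrow> 'v) \<Rightarrow> 'v set \<Rightarrow> 'v set \<Rightarrow> ('v \<Rightarrow> 'v \<Rightarrow> 'v) \<Rightarrow>
   (nat \<Rightarrow> bool) \<Rightarrow> (nat \<Rightarrow> nat \<Rightarrow> nat \<Rightarrow> 'a) \<Rightarrow> bool" where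
  "iso_model scale L0 L1 br par c \<longleftrightarrow>
     (\<exists>e :: nat \<Rightarrow> 'v.
        inj_on e {1,2,3} \<and> module.independent scale (e ` {1,2,3}) \<and>
        module.span scale (e ` {1,2,3}) = UNIV \<and>
        (\<forall>i\<in>{1,2,3}. e i \<in> gpart L0 L1 (par i)) \<and>
        (\<forall>i\<in>{1,2,3}. \<forall>j\<in>{1,2,3}. i \<le> j \<longrightarrow>
            br (e i) (e j) = (\<Sum>k\<in>{1,2,3}. scale (c i j k) (e k))))"

definition par03 :: "nat \<Rightarrow> bool" where "par03 i = True"
definition par12 :: "nat \<Rightarrow> bool" where "par12 i = (i \<noteq> 1)"
definition par21 :: "nat \<Rightarrow> bool" where "par21 i = (i = 3)"
definition par30 :: "nat \<Rightarrow> bool" where "par30 i = False"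

definition c_abelian :: "nat \<Rightarrow> nat \<Rightarrow> nat \<Rightarrow> 'a::field" where
  "c_abelian i j k = 0"
(* single nonzero bracket [e_a, e_b] = e_r (a <= b) *)
definition c_one :: "nat \<Rightarrow> nat \<Rightarrow> nat \<Rightarrow> nat \<Rightarrow> nat \<Rightarrow> nat \<Rightarrow> 'a::field" where
  "c_one a b r i j k = (if i = a \<and> j = b \<and> k = r then 1 else 0)"

end

theory Submission
  imports Defs
begin

text \<open>
  In a nilpotent Lie superalgebra some nonzero homogeneous element is central, and no even
  element has a homogeneous eigenvector with nonzero eigenvalue, since such an eigenvector
  lies in every term of the lower central series. Choose a homogeneous basis and split
  according to the superdimension. For \<open>(3|0)\<close> and \<open>(2|1)\<close> these two facts kill all
  brackets but one, which is normalised to a basis vector. For \<open>(1|2)\<close>, either an odd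
  element is central, and then the identity \<open>[x,[x,x]] = 0\<close> leaves at most one of
  \<open>[e\<^sub>1,e\<^sub>2]\<close> and \<open>[e\<^sub>3,e\<^sub>3]\<close>; or the even line is central and the bracket of odd
  elements is a nondegenerate symmetric form with values in \<open>L\<^sub>0\<close>, which over an algebraically
  closed field of characteristic \<open>\<noteq> 2\<close> has a hyperbolic basis, giving
  \<open>[e\<^sub>2,e\<^sub>3] = e\<^sub>1\<close>. For \<open>(0|3)\<close> all brackets lie in \<open>L\<^sub>0 = 0\<close>.
\<close>

lemma two_neq_zero_if_CHAR_ge_3:
  assumes "CHAR('a::semiring_1) \<ge> 3"
  shows "(2::'a) \<noteq> 0"
proof
  assume "(2::'a) = 0"
  then have "of_nat 2 = (0::'a)" by simp
  then have "CHAR('a) dvd 2" by (simp only: of_nat_eq_0_iff_char_dvd)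
  then show False using assms by (auto dest: dvd_imp_le)
qed

lemma alg_closed_quadratic_root:
  assumes "alg_closed TYPE('a::field)" and "(p::'a) \<noteq> 0"
  obtains r where "p * r\<^sup>2 + q * r + s = 0"
proof -
  have "degree [:s, q, p:] > 0" using assms(2) by simp
  then obtain r where "poly [:s, q, p:] r = 0" using assms(1) unfolding alg_closed_def by blast
  then have "p * r\<^sup>2 + q * r + s = 0" by (simp add: algebra_simps power2_eq_square)
  then show thesis by (rule that)
qed

context vector_space
begin

lemma span_singletonE:
  assumes "x \<in> span {p}"
  obtains \<alpha> where "x = \<alpha> *s p"
  using assms by (auto simp: span_singleton)

lemma span_pairE:
  assumes "x \<in> span {p, q}"
  obtains \<alpha> \<beta> where "x = \<alpha> *s p + \<beta> *s q"
proof -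
  obtain \<alpha> where "x - \<alpha> *s p \<in> span {q}" using assms span_breakdown_eq by blast
  then obtain \<beta> where "x - \<alpha> *s p = \<beta> *s q" by (rule span_singletonE)
  then show thesis by (intro that[of \<alpha> \<beta>]) (simp add: algebra_simps)
qed

lemma span_tripleE:
  assumes "x \<in> span {p, q, r}"
  obtains \<alpha> \<beta> \<gamma> where "x = \<alpha> *s p + \<beta> *s q + \<gamma> *s r"
proof -
  obtain \<alpha> where "x - \<alpha> *s p \<in> span {q, r}" using assms span_breakdown_eq by blast
  then obtain \<beta> \<gamma> where "x - \<alpha> *s p = \<beta> *s q + \<gamma> *s r" by (rule span_pairE)
  then show thesis by (intro that[of \<alpha> \<beta> \<gamma>]) (simp add: algebra_simps)
qed

lemma span_eq_UNIV_if_spanned: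
  assumes "T \<subseteq> span S" and "span T = UNIV"
  shows "span S = UNIV"
  using assms span_minimal[OF _ subspace_span, of T S] by auto

lemma span_exchange_pair:
  assumes "span {p, q, r} = UNIV" and "z \<in> span {q, r}" and "z \<noteq> 0"
  obtains d where "d \<in> {q, r}" and "span {p, z, d} = UNIV"
proof (cases "z \<in> span {r}")
  case True
  then have "r \<in> span {z}" using in_span_insert[of z r "{}"] \<open>z \<noteq> 0\<close> by simp
  then have "{p, q, r} \<subseteq> span {p, z, q}"
    using span_mono[of "{z}" "{p, z, q}"] by (auto intro: span_base)
  then show thesis using that[of q] span_eq_UNIV_if_spanned assms(1) by blast
next
  case False
  then have "q \<in> span {z, r}" using in_span_insert[of z q "{r}"] assms(2) by simp
  then have "{p, q, r} \<subseteq> span {p, z, r}"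
    using span_mono[of "{z, r}" "{p, z, r}"] by (auto intro: span_base)
  then show thesis using that[of r] span_eq_UNIV_if_spanned assms(1) by blast
qed

lemma span_exchange_triple:
  assumes "span {p, q, r} = UNIV" and "z \<noteq> 0"
  obtains d d' where "d \<in> {p, q, r}" and "d' \<in> {p, q, r}" and "span {z, d, d'} = UNIV"
proof (cases "z \<in> span {q, r}")
  case True
  then obtain d where "d \<in> {q, r}" "span {p, z, d} = UNIV"
    using span_exchange_pair assms by blast
  then show thesis using that[of p d] by (simp add: insert_commute)
next
  case False
  have "z \<in> span (insert p {q, r})" using assms(1) by simp
  then have "p \<in> span {z, q, r}" using in_span_insert[of z p "{q, r}"] False by simp
  then have "{p, q, r} \<subseteq> span {z, q, r}" by (auto intro: span_base)
  then show thesis using that[of q r] span_eq_UNIV_if_spanned assms(1) by blast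
qed

end

context finite_dimensional_vector_space
begin

lemma spanning_triple_basis:
  assumes "dim UNIV = 3" and "span {x1, x2, x3} = UNIV"
  shows "x1 \<noteq> x2 \<and> x1 \<noteq> x3 \<and> x2 \<noteq> x3 \<and> independent {x1, x2, x3}"
proof -
  have "card {x1, x2, x3} \<ge> 3"
    using dim_le_card[of UNIV "{x1, x2, x3}"] assms by simp
  then have distinct: "x1 \<noteq> x2 \<and> x1 \<noteq> x3 \<and> x2 \<noteq> x3"
    by (cases "x1 = x2"; cases "x1 = x3"; cases "x2 = x3"; simp add: card_insert_if)
  have "independent {x1, x2, x3}"
    by (rule card_le_dim_spanning[of _ UNIV]) (use assms distinct in auto)
  with distinct show ?thesis by simp
qed

lemma spanning_triple_last_coeff_eq_0:
  assumes "dim UNIV = 3" and "span {x1, x2, x3} = UNIV"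
    and "\<alpha> *s x1 + \<beta> *s x2 + \<gamma> *s x3 = 0"
  shows "\<gamma> = 0"
proof (rule ccontr)
  assume "\<gamma> \<noteq> 0"
  have "\<gamma> *s x3 = - (\<alpha> *s x1 + \<beta> *s x2)"
    using assms(3) by (metis add.commute eq_neg_iff_add_eq_0)
  then have "x3 = (- inverse \<gamma>) *s (\<alpha> *s x1 + \<beta> *s x2)"
    using \<open>\<gamma> \<noteq> 0\<close> by (metis scale_minus_left scale_minus_right scale_scale left_inverse scale_one)
  then have "x3 \<in> span {x1, x2}" by (simp add: span_neg span_add span_scale span_base)
  moreover have "independent (insert x3 {x1, x2})" "x3 \<notin> {x1, x2}"
    using spanning_triple_basis[OF assms(1,2)] by (auto simp: insert_commute)
  ultimately show False by (simp add: independent_insert)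
qed

lemma spanning_triple_lincomb_eq_0:
  assumes "dim UNIV = 3" and "span {x1, x2, x3} = UNIV"
    and "\<alpha> *s x1 + \<beta> *s x2 + \<gamma> *s x3 = 0"
  shows "\<alpha> = 0 \<and> \<beta> = 0 \<and> \<gamma> = 0"
proof -
  have "\<gamma> = 0" using spanning_triple_last_coeff_eq_0 assms .
  moreover have "\<beta> = 0"
    using spanning_triple_last_coeff_eq_0[OF assms(1), of x1 x3 x2 \<alpha> \<gamma> \<beta>] assms(2,3)
    by (simp add: insert_commute algebra_simps)
  moreover have "\<alpha> = 0"
    using spanning_triple_last_coeff_eq_0[OF assms(1), of x2 x3 x1 \<beta> \<gamma> \<alpha>] assms(2,3)
    by (simp add: insert_commute algebra_simps)
  ultimately show ?thesis by simp
qed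

end

locale lie_superalg =
  fixes scale :: "'a::field \<Rightarrow> 'v::ab_group_add \<Rightarrow> 'v" (infixr \<open>*s\<close> 75)
    and L0 L1 :: "'v set" and br :: "'v \<Rightarrow> 'v \<Rightarrow> 'v"
  assumes lie_superalgebra: "lie_superalgebra scale L0 L1 br"
begin

sublocale vector_space scale
  using lie_superalgebra unfolding lie_superalgebra_def by (elim conjE)

abbreviation homogeneous :: "'v \<Rightarrow> bool" where
  "homogeneous x \<equiv> x \<in> L0 \<or> x \<in> L1"

lemma subspace_L0: "subspace L0"
  and subspace_L1: "subspace L1"
  and L0_inter_L1: "L0 \<inter> L1 = {0}"
  and sum_L0_L1_eq_UNIV: "\<forall>v. \<exists>a\<in>L0. \<exists>b\<in>L1. v = a + b"
  and bracket_add_left [rule_format, simp]: "\<forall>x y z. br (x + y) z = br x z + br y z"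
  and bracket_add_right [rule_format, simp]: "\<forall>x y z. br x (y + z) = br x y + br x z"
  and bracket_scale_left [rule_format, simp]: "\<forall>c x y. br (c *s x) y = c *s br x y"
  and bracket_scale_right [rule_format, simp]: "\<forall>c x y. br x (c *s y) = c *s br x y"
  and bracket_gpart [rule_format]: "\<forall>d e x y. x \<in> gpart L0 L1 d \<longrightarrow> y \<in> gpart L0 L1 e \<longrightarrow>
        br x y \<in> gpart L0 L1 (d \<noteq> e)"
  and bracket_swap_gpart [rule_format]: "\<forall>d e x y. x \<in> gpart L0 L1 d \<longrightarrow> y \<in> gpart L0 L1 e \<longrightarrow>
        br x y = - (ssign d e *s br y x)"
  and odd_bracket_cube [rule_format]: "\<forall>x\<in>L1. br x (br x x) = 0"
  using lie_superalgebra[unfolded lie_superalgebra_def] by - (elim conjE; assumption)+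

lemma grading_decomposition:
  obtains a b where "a \<in> L0" and "b \<in> L1" and "v = a + b"
  using sum_L0_L1_eq_UNIV by blast

lemma bracket_zero_left [simp]: "br 0 y = 0"
  using bracket_add_left[of 0 0 y] by simp

lemma bracket_zero_right [simp]: "br x 0 = 0"
  using bracket_add_right[of x 0 0] by simp

lemma bracket_minus_left [simp]: "br (- x) y = - br x y"
  using bracket_add_left[of x "- x" y] by (simp add: add_eq_0_iff)

lemma bracket_minus_right [simp]: "br x (- y) = - br x y"
  using bracket_add_right[of x y "- y"] by (simp add: add_eq_0_iff)

lemma bracket_diff_left [simp]: "br (x - y) z = br x z - br y z"
  using bracket_add_left[of x "- y" z] by simp

lemma bracket_diff_right [simp]: "br x (y - z) = br x y - br x z"
  using bracket_add_right[of x y "- z"] by simp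

lemma bracket_L0_L0: "x \<in> L0 \<Longrightarrow> y \<in> L0 \<Longrightarrow> br x y \<in> L0"
  and bracket_L0_L1: "x \<in> L0 \<Longrightarrow> y \<in> L1 \<Longrightarrow> br x y \<in> L1"
  and bracket_L1_L0: "x \<in> L1 \<Longrightarrow> y \<in> L0 \<Longrightarrow> br x y \<in> L1"
  and bracket_L1_L1: "x \<in> L1 \<Longrightarrow> y \<in> L1 \<Longrightarrow> br x y \<in> L0"
  using bracket_gpart[of x False y False] bracket_gpart[of x False y True]
    bracket_gpart[of x True y False] bracket_gpart[of x True y True]
  by (simp_all add: gpart_def)

lemma bracket_swap_L0: "x \<in> L0 \<Longrightarrow> homogeneous y \<Longrightarrow> br y x = - br x y"
  using bracket_swap_gpart[of y False x False] bracket_swap_gpart[of y True x False]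
  by (auto simp: gpart_def ssign_def)

lemma bracket_swap_L1_L1: "x \<in> L1 \<Longrightarrow> y \<in> L1 \<Longrightarrow> br y x = br x y"
  using bracket_swap_gpart[of y True x True] by (simp add: gpart_def ssign_def)

lemma bracket_eq_0_swap:
  assumes "homogeneous x" and "homogeneous y" and "br x y = 0"
  shows "br y x = 0"
  using assms bracket_swap_L0 bracket_swap_L1_L1 by (metis neg_equal_0_iff_equal)

lemma bracket_self_L0:
  assumes "(2::'a) \<noteq> 0" and "x \<in> L0"
  shows "br x x = 0"
proof -
  have "br x x = - br x x" using bracket_swap_L0 assms(2) by blast
  then have "(2::'a) *s br x x = 0"
    by (metis add.inverse_neutral eq_neg_iff_add_eq_0 one_add_one scale_left_distrib scale_one)
  then show ?thesis using assms(1) by simp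
qed

lemma L0_L1_add_eq_0:
  assumes "u \<in> L0" and "w \<in> L1" and "u + w = 0"
  shows "u = 0" and "w = 0"
proof -
  have "u = - w" using assms(3) by (simp add: add_eq_0_iff)
  then have "u \<in> L1" using assms(2) subspace_L1 subspace_neg by metis
  then show "u = 0" using assms(1) L0_inter_L1 by auto
  then show "w = 0" using assms(3) by simp
qed

lemma central_components_central:
  assumes central: "\<And>y. br z y = 0" and "a \<in> L0" and "b \<in> L1" and "z = a + b"
  shows "br a y = 0" and "br b y = 0"
proof -
  obtain y0 y1 where y: "y0 \<in> L0" "y1 \<in> L1" "y = y0 + y1" by (rule grading_decomposition)
  have "br a y0 + br b y0 = 0" using central[of y0] assms(4) by simp
  then have 0: "br a y0 = 0" "br b y0 = 0"
    using L0_L1_add_eq_0 bracket_L0_L0[OF assms(2) y(1)] bracket_L1_L0[OF assms(3) y(1)]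
    by blast+
  have "br b y1 + br a y1 = 0" using central[of y1] assms(4) by (simp add: add.commute)
  then have 1: "br b y1 = 0" "br a y1 = 0"
    using L0_L1_add_eq_0 bracket_L1_L1[OF assms(3) y(2)] bracket_L0_L1[OF assms(2) y(2)]
    by blast+
  show "br a y = 0" and "br b y = 0" using 0 1 y(3) by simp_all
qed

lemma independent_Un_L0_L1:
  assumes "finite B1" and "B1 \<subseteq> L1" and "independent B1" and "B0 \<subseteq> L0" and "independent B0"
  shows "independent (B0 \<union> B1)"
  using assms
proof (induction B1 rule: finite_induct)
  case empty
  then show ?case by simp
next
  case (insert b F)
  have "b \<notin> span F" using insert.prems(2) insert.hyps(2) by (simp add: independent_insert)
  have "independent (B0 \<union> F)"
    using insert.IH insert.prems independent_mono by blast
  moreover have "b \<notin> span (B0 \<union> F)"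
  proof
    assume "b \<in> span (B0 \<union> F)"
    then obtain x y where xy: "b = x + y" "x \<in> span B0" "y \<in> span F" by (auto simp: span_Un)
    have "x \<in> L0" using xy(2) insert.prems(3) subspace_L0 span_minimal by blast
    moreover have "x \<in> L1"
      using xy insert.prems(1) subspace_L1 span_minimal[of F L1]
      by (metis add_diff_cancel_right' insert_subset subset_iff subspace_diff)
    ultimately have "x = 0" using L0_inter_L1 by blast
    then show False using xy \<open>b \<notin> span F\<close> by simp
  qed
  ultimately show ?case by (simp add: independent_insert)
qed

end

locale nilpotent_lie_superalg = lie_superalg scale L0 L1 br
  for scale :: "'a::field \<Rightarrow> 'v::ab_group_add \<Rightarrow> 'v" (infixr \<open>*s\<close> 75)
    and L0 L1 :: "'v set" and br :: "'v \<Rightarrow> 'v \<Rightarrow> 'v" +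
  assumes nilpotent: "nilpotent_lsa scale br"
begin

lemma eq_scale_bracket_imp_eq_0:
  assumes "v = c *s br v y"
  shows "v = 0"
proof -
  have "v \<in> lcs scale br k" for k
  proof (induction k)
    case 0
    then show ?case by simp
  next
    case (Suc k)
    then have "br v y \<in> lcs scale br (Suc k)" by (auto intro: span_base)
    then have "c *s br v y \<in> lcs scale br (Suc k)" unfolding lcs.simps by (rule span_scale)
    then show ?case using assms by metis
  qed
  moreover obtain k where "lcs scale br k = {0}" using nilpotent nilpotent_lsa_def by blast
  ultimately show ?thesis by blast
qed

lemma ad_even_eigenvector_eq_0:
  assumes "x \<in> L0" and "homogeneous v" and "br x v = c *s v" and "c \<noteq> 0"
  shows "v = 0"
proof -
  have "br v x = - (c *s v)" using bracket_swap_L0 assms(1-3) by simp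
  then have "v = (- inverse c) *s br v x" using assms(4) by simp
  then show ?thesis by (rule eq_scale_bracket_imp_eq_0)
qed

lemma central_exists:
  assumes "(v::'v) \<noteq> 0"
  obtains z where "z \<noteq> 0" and "\<And>y. br z y = 0"
proof -
  have "\<exists>z. z \<noteq> 0 \<and> (\<forall>y. br z y = 0)"
  proof (rule ccontr)
    assume no_centre: "\<nexists>z. z \<noteq> 0 \<and> (\<forall>y. br z y = 0)"
    have "\<exists>w\<in>lcs scale br k. w \<noteq> 0" for k
    proof (induction k)
      case 0
      then show ?case using assms by auto
    next
      case (Suc k)
      then obtain w where "w \<in> lcs scale br k" and "w \<noteq> 0" by blast
      moreover obtain y where "br w y \<noteq> 0" using no_centre \<open>w \<noteq> 0\<close> by blast
      ultimately show ?case by (auto intro: span_base)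
    qed
    then show False using nilpotent nilpotent_lsa_def by (metis singletonD)
  qed
  then show thesis using that by blast
qed

lemma homogeneous_central_exists:
  assumes "(v::'v) \<noteq> 0"
  obtains z where "z \<noteq> 0" and "homogeneous z" and "\<And>y. br z y = 0"
proof -
  obtain z where "z \<noteq> 0" and central: "\<And>y. br z y = 0" using central_exists assms by blast
  obtain a b where ab: "a \<in> L0" "b \<in> L1" "z = a + b" by (rule grading_decomposition)
  then have "br a y = 0" and "br b y = 0" for y using central_components_central central by blast+
  moreover have "a \<noteq> 0 \<or> b \<noteq> 0" using \<open>z \<noteq> 0\<close> ab(3) by auto
  ultimately show thesis using that ab(1,2) by blast
qed

lemma bracket_even_pair_components_eq_0:
  assumes "a \<in> L0" and "b \<in> L0" and "br a a = 0" and "br b b = 0"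
    and "br a z = 0" and "br b z = 0"
    and decomp: "br a b = \<gamma> *s z + \<alpha> *s a + \<beta> *s b" and nonzero: "br a b \<noteq> 0"
  shows "\<alpha> = 0" and "\<beta> = 0"
proof -
  have even: "homogeneous (br a b)" using bracket_L0_L0 assms(1,2) by blast
  have "br a (br a b) = \<beta> *s br a b"
    by (subst (1) decomp) (simp add: assms(3,5))
  then show "\<beta> = 0"
    using ad_even_eigenvector_eq_0[OF assms(1) even] nonzero by auto
  have "br b a = - br a b" using bracket_swap_L0 assms(1,2) by blast
  then have "br b (br a b) = (- \<alpha>) *s br a b"
    by (subst (1) decomp) (simp add: assms(4,6))
  then show "\<alpha> = 0"
    using ad_even_eigenvector_eq_0[OF assms(2) even] nonzero neg_equal_0_iff_equal by metis
qed


lemma bracket_L0_eq_0_if_L1_line: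
  assumes "L1 = span {c}" and "x \<in> L0"
  shows "br x c = 0"
proof -
  have "c \<in> L1" using assms(1) by (auto intro: span_base)
  obtain \<kappa> where eigen: "br x c = \<kappa> *s c"
    using bracket_L0_L1[OF assms(2) \<open>c \<in> L1\<close>] assms(1) span_singletonE by blast
  show ?thesis
  proof (cases "\<kappa> = 0")
    case False
    then have "c = 0" using ad_even_eigenvector_eq_0[OF assms(2) _ eigen] \<open>c \<in> L1\<close> by blast
    then show ?thesis by simp
  qed (simp add: eigen)
qed

end

locale nilpotent_lie_superalg_dim3 =
  nilpotent_lie_superalg scale L0 L1 br + finite_dimensional_vector_space scale Basis
  for scale :: "'a::field \<Rightarrow> 'v::ab_group_add \<Rightarrow> 'v" (infixr \<open>*s\<close> 75)
    and L0 L1 :: "'v set" and br :: "'v \<Rightarrow> 'v \<Rightarrow> 'v" and Basis :: "'v set" +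
  assumes card_Basis: "card Basis = 3"
    and two_neq_zero: "(2::'a) \<noteq> 0"
begin

lemma dim_UNIV_eq_3: "dim UNIV = 3"
  by (simp add: card_Basis)

lemmas spanning_triple_basis3 = spanning_triple_basis[OF dim_UNIV_eq_3]
lemmas spanning_triple_lincomb3_eq_0 = spanning_triple_lincomb_eq_0[OF dim_UNIV_eq_3]
lemmas bracket_self_even = bracket_self_L0[OF two_neq_zero]

lemma iso_model_intro:
  assumes span: "span {x1, x2, x3} = UNIV"
    and "x1 \<in> gpart L0 L1 (par 1)" and "x2 \<in> gpart L0 L1 (par 2)" and "x3 \<in> gpart L0 L1 (par 3)"
    and "br x1 x1 = c 1 1 1 *s x1 + c 1 1 2 *s x2 + c 1 1 3 *s x3"
    and "br x1 x2 = c 1 2 1 *s x1 + c 1 2 2 *s x2 + c 1 2 3 *s x3"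
    and "br x1 x3 = c 1 3 1 *s x1 + c 1 3 2 *s x2 + c 1 3 3 *s x3"
    and "br x2 x2 = c 2 2 1 *s x1 + c 2 2 2 *s x2 + c 2 2 3 *s x3"
    and "br x2 x3 = c 2 3 1 *s x1 + c 2 3 2 *s x2 + c 2 3 3 *s x3"
    and "br x3 x3 = c 3 3 1 *s x1 + c 3 3 2 *s x2 + c 3 3 3 *s x3"
  shows "iso_model scale L0 L1 br par c"
proof -
  define e where "e i = (if i = 1 then x1 else if i = 2 then x2 else x3)" for i :: nat
  have basis: "x1 \<noteq> x2 \<and> x1 \<noteq> x3 \<and> x2 \<noteq> x3 \<and> independent {x1, x2, x3}"
    using spanning_triple_basis3[OF span] .
  have image: "e ` {1, 2, 3} = {x1, x2, x3}" by (auto simp: e_def)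
  have inj: "inj_on e {1, 2, 3}" using basis by (auto simp: inj_on_def e_def)
  have parity: "\<forall>i\<in>{1, 2, 3}. e i \<in> gpart L0 L1 (par i)" using assms(2-4) by (auto simp: e_def)
  have sum: "(\<Sum>k\<in>{1, 2, 3}. c i j k *s e k) = c i j 1 *s x1 + c i j 2 *s x2 + c i j 3 *s x3"
    for i j by (simp add: e_def)
  have table: "\<forall>i\<in>{1, 2, 3}. \<forall>j\<in>{1, 2, 3}. i \<le> j \<longrightarrow> br (e i) (e j) = (\<Sum>k\<in>{1, 2, 3}. c i j k *s e k)"
  proof (intro ballI impI)
    fix i j :: nat
    assume "i \<in> {1, 2, 3}" and "j \<in> {1, 2, 3}" and "i \<le> j"
    then consider "i = 1" "j = 1" | "i = 1" "j = 2" | "i = 1" "j = 3" | "i = 2" "j = 2"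
      | "i = 2" "j = 3" | "i = 3" "j = 3" by auto
    then show "br (e i) (e j) = (\<Sum>k\<in>{1, 2, 3}. c i j k *s e k)"
      unfolding sum using assms(5-10) by cases (simp_all add: e_def)
  qed
  show ?thesis
    unfolding iso_model_def using inj basis span image parity table by (intro exI[of _ e]) simp
qed

lemma homogeneous_basis_exists:
  obtains B0 B1 where "finite B0" and "finite B1" and "B0 \<subseteq> L0" and "B1 \<subseteq> L1"
    and "span B0 = L0" and "span B1 = L1" and "span (B0 \<union> B1) = UNIV" and "card B0 + card B1 = 3"
proof -
  obtain B0 where B0: "B0 \<subseteq> L0" "independent B0" "L0 \<subseteq> span B0" using basis_exists by metis
  obtain B1 where B1: "B1 \<subseteq> L1" "independent B1" "L1 \<subseteq> span B1" using basis_exists by metis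
  have finite: "finite B0" "finite B1" using B0(2) B1(2) finiteI_independent by auto
  have span0: "span B0 = L0" using span_subspace[OF B0(1,3) subspace_L0] .
  have span1: "span B1 = L1" using span_subspace[OF B1(1,3) subspace_L1] .
  have "v \<in> span (B0 \<union> B1)" for v
  proof -
    obtain a b where "a \<in> L0" "b \<in> L1" "v = a + b" by (rule grading_decomposition)
    moreover have "L0 \<subseteq> span (B0 \<union> B1)" and "L1 \<subseteq> span (B0 \<union> B1)"
      using span0 span1 span_mono[of B0 "B0 \<union> B1"] span_mono[of B1 "B0 \<union> B1"] by auto
    ultimately show ?thesis using span_add by blast
  qed
  then have span: "span (B0 \<union> B1) = UNIV" by auto
  have "independent (B0 \<union> B1)" using independent_Un_L0_L1[OF finite(2) B1(1,2) B0(1,2)] .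
  then have "card (B0 \<union> B1) = 3" using basis_card_eq_dim[of "B0 \<union> B1" UNIV] span dim_UNIV_eq_3 by simp
  moreover have "B0 \<inter> B1 = {}"
  proof (intro equals0I)
    fix x
    assume "x \<in> B0 \<inter> B1"
    then have "x = 0" using B0(1) B1(1) L0_inter_L1 by auto
    then show False using \<open>x \<in> B0 \<inter> B1\<close> B0(2) dependent_zero by auto
  qed
  ultimately have "card B0 + card B1 = 3" using finite by (simp add: card_Un_disjoint)
  with finite B0(1) B1(1) span0 span1 span show thesis by (rule that)
qed

lemma nonzero_vector_exists: obtains v :: 'v where "v \<noteq> 0"
proof -
  have "Basis \<noteq> {}" using card_Basis by auto
  then obtain v where "v \<in> Basis" by blast
  moreover have "0 \<notin> Basis" using independent_Basis dependent_zero by blast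
  ultimately show thesis using that by metis
qed

lemma classification_0_3:
  assumes "L0 = {0}" and "x1 \<in> L1" and "x2 \<in> L1" and "x3 \<in> L1" and "span {x1, x2, x3} = UNIV"
  shows "iso_model scale L0 L1 br par03 c_abelian"
proof -
  have "br x y = 0" if "x \<in> L1" and "y \<in> L1" for x y
    using bracket_L1_L1[OF that] assms(1) by simp
  then show ?thesis
    by (intro iso_model_intro[OF assms(5)]) (simp_all add: gpart_def par03_def c_abelian_def assms(2-4))
qed

lemma classification_3_0:
  assumes "L1 = {0}" and span: "span {b1, b2, b3} = UNIV"
  shows "iso_model scale L0 L1 br par30 c_abelian \<or> iso_model scale L0 L1 br par30 (c_one 1 2 3)"
proof -
  have even: "v \<in> L0" for v
  proof -
    obtain a b where "a \<in> L0" and "b \<in> L1" and "v = a + b" by (rule grading_decomposition)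
    then show ?thesis using assms(1) by simp
  qed
  then have self: "br v v = 0" for v using bracket_self_even by blast
  obtain v :: 'v where "v \<noteq> 0" by (rule nonzero_vector_exists)
  then obtain z where "z \<noteq> 0" and z_left: "\<And>y. br z y = 0" using central_exists by metis
  have z_right: "br y z = 0" for y using bracket_eq_0_swap even z_left by blast
  obtain a b where span_zab: "span {z, a, b} = UNIV"
    using span_exchange_triple[OF span \<open>z \<noteq> 0\<close>] by blast
  show ?thesis
  proof (cases "br a b = 0")
    case True
    have "iso_model scale L0 L1 br par30 c_abelian"
      by (rule iso_model_intro[OF span_zab])
        (simp_all add: gpart_def par30_def c_abelian_def even self z_left z_right True)
    then show ?thesis ..
  next
    case False
    obtain \<gamma> \<alpha> \<beta> where decomp: "br a b = \<gamma> *s z + \<alpha> *s a + \<beta> *s b"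
      using span_tripleE span_zab by blast
    then have "\<alpha> = 0" and "\<beta> = 0"
      using bracket_even_pair_components_eq_0 even self z_right False by blast+
    then have ab: "br a b = \<gamma> *s z" using decomp by simp
    then have "\<gamma> \<noteq> 0" using False by auto
    then have "z = inverse \<gamma> *s br a b" using ab by simp
    then have "{z, a, b} \<subseteq> span {a, b, br a b}" by (auto intro: span_base span_scale)
    then have "span {a, b, br a b} = UNIV" using span_eq_UNIV_if_spanned span_zab by blast
    then have "iso_model scale L0 L1 br par30 (c_one 1 2 3)"
      by (rule iso_model_intro)
        (simp_all add: gpart_def par30_def c_one_def even self z_left z_right ab)
    then show ?thesis ..
  qed
qed

lemma bracket_eq_0_if_L0_eq_span_pair:
  assumes L0: "L0 = span {a, b}"
  shows "br a b = 0"
proof (rule ccontr)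
  assume nonzero: "br a b \<noteq> 0"
  have "a \<in> L0" and "b \<in> L0" using L0 by (auto intro: span_base)
  obtain \<alpha> \<beta> where decomp: "br a b = \<alpha> *s a + \<beta> *s b"
    using bracket_L0_L0[OF \<open>a \<in> L0\<close> \<open>b \<in> L0\<close>] L0 span_pairE by blast
  then have "br a b = 0 *s 0 + \<alpha> *s a + \<beta> *s b" by simp
  from bracket_even_pair_components_eq_0[OF \<open>a \<in> L0\<close> \<open>b \<in> L0\<close>
      bracket_self_even[OF \<open>a \<in> L0\<close>] bracket_self_even[OF \<open>b \<in> L0\<close>]
      bracket_zero_right bracket_zero_right this nonzero]
  show False using decomp nonzero by simp
qed

lemma classification_2_1:
  assumes L0: "L0 = span {a, b}" and L1: "L1 = span {c}" and span: "span {a, b, c} = UNIV"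
  shows "iso_model scale L0 L1 br par21 c_abelian \<or> iso_model scale L0 L1 br par21 (c_one 3 3 2)"
proof -
  have "a \<in> L0" and "b \<in> L0" and "c \<in> L1" using L0 L1 by (auto intro: span_base)
  have aa: "br a a = 0" and bb: "br b b = 0" using bracket_self_even \<open>a \<in> L0\<close> \<open>b \<in> L0\<close> by auto
  have ab: "br a b = 0" using L0 by (rule bracket_eq_0_if_L0_eq_span_pair)
  have ba: "br b a = 0" using bracket_eq_0_swap ab \<open>a \<in> L0\<close> \<open>b \<in> L0\<close> by blast
  have ad_c: "br x c = 0" if "x \<in> L0" for x using bracket_L0_eq_0_if_L1_line L1 that by blast
  show ?thesis
  proof (cases "br c c = 0")
    case True
    have "iso_model scale L0 L1 br par21 c_abelian"
      by (rule iso_model_intro[OF span]) (simp_all add: gpart_def par21_def c_abelian_def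
          \<open>a \<in> L0\<close> \<open>b \<in> L0\<close> \<open>c \<in> L1\<close> aa bb ab ad_c True)
    then show ?thesis ..
  next
    case False
    define u where "u = br c c"
    have "u \<in> L0" unfolding u_def using bracket_L1_L1 \<open>c \<in> L1\<close> by blast
    have cu: "br c u = 0" unfolding u_def using odd_bracket_cube \<open>c \<in> L1\<close> by blast
    have uc: "br u c = 0" using ad_c \<open>u \<in> L0\<close> by blast
    have "span {c, a, b} = UNIV" using span by (simp add: insert_commute)
    moreover have "u \<in> span {a, b}" and "u \<noteq> 0" using \<open>u \<in> L0\<close> L0 False u_def by auto
    ultimately obtain d where "d \<in> {a, b}" and "span {c, u, d} = UNIV"
      by (rule span_exchange_pair)
    then have span_duc: "span {d, u, c} = UNIV" by (simp add: insert_commute)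
    have "d \<in> L0" using \<open>d \<in> {a, b}\<close> \<open>a \<in> L0\<close> \<open>b \<in> L0\<close> by blast
    have du: "br d u = 0"
    proof -
      obtain \<mu> \<nu> where "u = \<mu> *s a + \<nu> *s b" using \<open>u \<in> L0\<close> L0 span_pairE by blast
      then show ?thesis using \<open>d \<in> {a, b}\<close> by (auto simp: aa bb ab ba)
    qed
    have "iso_model scale L0 L1 br par21 (c_one 3 3 2)"
      by (rule iso_model_intro[OF span_duc]) (simp_all add: gpart_def par21_def c_one_def
          \<open>d \<in> L0\<close> \<open>u \<in> L0\<close> \<open>c \<in> L1\<close> bracket_self_even du ad_c cu uc u_def[symmetric])
    then show ?thesis ..
  qed
qed

lemma bracket_even_odd_central_multiple:
  assumes "a \<in> L0" and "z \<in> L1" and "d \<in> L1" and az: "br a z = 0"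
    and span: "span {a, z, d} = UNIV"
  obtains \<mu> where "br a d = \<mu> *s z"
proof -
  obtain \<kappa> \<mu> \<nu> where decomp: "br a d = \<kappa> *s a + \<mu> *s z + \<nu> *s d"
    using span_tripleE span by blast
  have "\<kappa> *s a = br a d - \<mu> *s z - \<nu> *s d" using decomp by (simp add: algebra_simps)
  also have "\<dots> \<in> L1"
    using bracket_L0_L1[OF \<open>a \<in> L0\<close> \<open>d \<in> L1\<close>] \<open>z \<in> L1\<close> \<open>d \<in> L1\<close> subspace_L1
    by (meson subspace_diff subspace_scale)
  finally have "\<kappa> *s a = 0" using \<open>a \<in> L0\<close> subspace_L0 subspace_scale L0_inter_L1 by blast
  then have decomp': "br a d = \<mu> *s z + \<nu> *s d" using decomp by simp
  have "\<nu> = 0"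
  proof (rule ccontr)
    assume "\<nu> \<noteq> 0"
    have "br a (br a d) = \<nu> *s br a d" by (subst (1) decomp') (simp add: az)
    then have "br a d = 0"
      using ad_even_eigenvector_eq_0 \<open>a \<in> L0\<close> bracket_L0_L1[OF \<open>a \<in> L0\<close> \<open>d \<in> L1\<close>] \<open>\<nu> \<noteq> 0\<close> by blast
    then have "0 *s a + \<mu> *s z + \<nu> *s d = 0" using decomp' by simp
    then show False using spanning_triple_lincomb3_eq_0[OF span] \<open>\<nu> \<noteq> 0\<close> by blast
  qed
  then show thesis using decomp' by (intro that[of \<mu>]) simp
qed

lemma classification_1_2_odd_centre:
  assumes L0: "L0 = span {a}" and "z \<in> L1" and "d \<in> L1" and "z \<noteq> 0"
    and z_central: "\<And>y. br z y = 0" and span: "span {a, z, d} = UNIV"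
  shows "iso_model scale L0 L1 br par12 c_abelian \<or> iso_model scale L0 L1 br par12 (c_one 1 2 3)
       \<or> iso_model scale L0 L1 br par12 (c_one 3 3 1)"
proof -
  have "a \<in> L0" using L0 by (auto intro: span_base)
  have aa: "br a a = 0" using bracket_self_even \<open>a \<in> L0\<close> by blast
  have az: "br a z = 0" and dz: "br d z = 0" and zz: "br z z = 0"
    using bracket_eq_0_swap z_central \<open>a \<in> L0\<close> \<open>d \<in> L1\<close> \<open>z \<in> L1\<close> by blast+
  obtain \<mu> where ad: "br a d = \<mu> *s z"
    using bracket_even_odd_central_multiple \<open>a \<in> L0\<close> \<open>z \<in> L1\<close> \<open>d \<in> L1\<close> az span by blast
  obtain \<kappa>' where dd: "br d d = \<kappa>' *s a"
    using bracket_L1_L1[OF \<open>d \<in> L1\<close> \<open>d \<in> L1\<close>] L0 span_singletonE by blast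
  have "br d a = - (\<mu> *s z)" using bracket_swap_L0[OF \<open>a \<in> L0\<close>] \<open>d \<in> L1\<close> ad by simp
  then have "(\<kappa>' * \<mu>) *s z = 0" using odd_bracket_cube[OF \<open>d \<in> L1\<close>] dd by simp
  then have "\<kappa>' * \<mu> = 0" using \<open>z \<noteq> 0\<close> by simp
  then consider "\<mu> = 0" "\<kappa>' = 0" | "\<mu> \<noteq> 0" "\<kappa>' = 0" | "\<kappa>' \<noteq> 0" "\<mu> = 0" by auto
  then show ?thesis
  proof cases
    case 1
    have "iso_model scale L0 L1 br par12 c_abelian"
      by (rule iso_model_intro[OF span]) (simp_all add: gpart_def par12_def c_abelian_def
          \<open>a \<in> L0\<close> \<open>z \<in> L1\<close> \<open>d \<in> L1\<close> aa az ad dz zz dd 1 z_central)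
    then show ?thesis by simp
  next
    case 2
    then have "z = inverse \<mu> *s (\<mu> *s z)" by simp
    then have "z \<in> span {a, d, \<mu> *s z}" by (metis insertCI span_base span_scale)
    then have "{a, z, d} \<subseteq> span {a, d, \<mu> *s z}" by (auto intro: span_base)
    then have "span {a, d, \<mu> *s z} = UNIV" using span_eq_UNIV_if_spanned span by blast
    then have "iso_model scale L0 L1 br par12 (c_one 1 2 3)"
      by (rule iso_model_intro) (simp_all add: gpart_def par12_def c_one_def subspace_scale[OF subspace_L1]
          \<open>a \<in> L0\<close> \<open>z \<in> L1\<close> \<open>d \<in> L1\<close> aa az ad dz zz dd 2 z_central)
    then show ?thesis by simp
  next
    case 3
    then have "a = inverse \<kappa>' *s (\<kappa>' *s a)" by simp
    then have "a \<in> span {\<kappa>' *s a, z, d}" by (metis insertCI span_base span_scale)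
    then have "{a, z, d} \<subseteq> span {\<kappa>' *s a, z, d}" by (auto intro: span_base)
    then have "span {\<kappa>' *s a, z, d} = UNIV" using span_eq_UNIV_if_spanned span by blast
    then have "iso_model scale L0 L1 br par12 (c_one 3 3 1)"
      by (rule iso_model_intro) (simp_all add: gpart_def par12_def c_one_def subspace_scale[OF subspace_L0]
          \<open>a \<in> L0\<close> \<open>z \<in> L1\<close> \<open>d \<in> L1\<close> aa az ad dz zz dd 3 z_central)
    then show ?thesis by simp
  qed
qed

lemma iso_model_1_2_hyperbolic:
  assumes "a \<in> L0" and a_central: "\<And>x. br a x = 0" and "u \<in> L1" and "y \<in> L1"
    and uu: "br u u = 0" and uy: "br u y = k *s a" and yy: "br y y = t *s a" and "k \<noteq> 0"
    and span: "span {a, u, y} = UNIV"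
  shows "iso_model scale L0 L1 br par12 (c_one 2 3 1)"
proof -
  define w where "w = inverse k *s (y - (t / (2 * k)) *s u)"
  have yu: "br y u = k *s a" using bracket_swap_L1_L1[OF \<open>u \<in> L1\<close> \<open>y \<in> L1\<close>] uy by simp
  have uw: "br u w = a" unfolding w_def using \<open>k \<noteq> 0\<close> by (simp add: uy uu)
  have "br w w = (inverse k * inverse k) *s
      (t *s a - (t / (2 * k)) *s (k *s a) - (t / (2 * k)) *s (k *s a))"
    unfolding w_def by (simp add: uu uy yu yy algebra_simps)
  also have "(t / (2 * k)) *s (k *s a) = (t / 2) *s a" using \<open>k \<noteq> 0\<close> by simp
  also have "t *s a - (t / 2) *s a - (t / 2) *s a = (t - t / 2 - t / 2) *s a"
    by (simp only: scale_left_diff_distrib)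
  also have "t - t / 2 - t / 2 = 0" using two_neq_zero by (simp add: field_simps)
  finally have ww: "br w w = 0" by simp
  have "w \<in> L1" unfolding w_def using \<open>u \<in> L1\<close> \<open>y \<in> L1\<close> subspace_L1
    by (meson subspace_diff subspace_scale)
  have "y = k *s w + (t / (2 * k)) *s u" unfolding w_def using \<open>k \<noteq> 0\<close> by simp
  then have "y \<in> span {a, u, w}" by (metis insertCI span_add span_base span_scale)
  then have "{a, u, y} \<subseteq> span {a, u, w}" by (auto intro: span_base)
  then have "span {a, u, w} = UNIV" using span_eq_UNIV_if_spanned span by blast
  then show ?thesis
    by (rule iso_model_intro) (simp_all add: gpart_def par12_def c_one_def
        \<open>a \<in> L0\<close> \<open>u \<in> L1\<close> \<open>w \<in> L1\<close> a_central uu uw ww)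
qed

lemma odd_bracket_form_nondegenerate:
  assumes "a \<in> L0" and a_central: "\<And>x. br a x = 0" and "b \<in> L1" and "c \<in> L1"
    and span: "span {a, b, c} = UNIV"
    and no_odd_centre: "\<forall>v\<in>L1. (\<forall>x. br v x = 0) \<longrightarrow> v = 0"
    and bb: "br b b = p *s a" and bc: "br b c = q *s a" and cc: "br c c = s *s a"
  shows "p * s \<noteq> q * q"
proof
  assume det: "p * s = q * q"
  have cb: "br c b = q *s a" using bracket_swap_L1_L1[OF \<open>b \<in> L1\<close> \<open>c \<in> L1\<close>] bc by simp
  have central: "br v x = 0" if "v \<in> L1" and "br v b = 0" and "br v c = 0" for v x
  proof -
    obtain \<alpha> \<beta> \<gamma> where "x = \<alpha> *s a + \<beta> *s b + \<gamma> *s c" using span_tripleE span by blast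
    moreover have "br v a = 0" using bracket_eq_0_swap a_central \<open>a \<in> L0\<close> \<open>v \<in> L1\<close> by blast
    ultimately show ?thesis using that by simp
  qed
  show False
  proof (cases "p = 0")
    case True
    then have "q = 0" using det by simp
    then have "b = 0" using central[OF \<open>b \<in> L1\<close>] no_odd_centre \<open>b \<in> L1\<close> bb bc True by simp
    then show False using spanning_triple_basis3[OF span] dependent_zero by (metis insertCI)
  next
    case False
    define v where "v = q *s b - p *s c"
    have "v \<in> L1" unfolding v_def using \<open>b \<in> L1\<close> \<open>c \<in> L1\<close> subspace_L1
      by (meson subspace_diff subspace_scale)
    moreover have "br v b = 0" unfolding v_def by (simp add: bb cb mult.commute)
    moreover have "br v c = 0" unfolding v_def by (simp add: bc cc det mult.commute)
    ultimately have "v = 0" using central no_odd_centre by blast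
    then have "0 *s a + q *s b + (- p) *s c = 0" unfolding v_def by simp
    from spanning_triple_lincomb3_eq_0[OF span this] show False using False by simp
  qed
qed

lemma isotropic_odd_vector_exists:
  assumes "alg_closed TYPE('a)" and "b \<in> L1" and "c \<in> L1"
    and bb: "br b b = p *s a" and bc: "br b c = q *s a" and cc: "br c c = s *s a"
    and "p \<noteq> 0" and det: "p * s \<noteq> q * q"
  obtains u k where "u \<in> L1" and "br u u = 0" and "br u b = k *s a" and "k \<noteq> 0"
    and "c \<in> span {u, b}"
proof -
  obtain r where root: "p * r\<^sup>2 + (2 * q) * r + s = 0"
    using alg_closed_quadratic_root[OF assms(1) \<open>p \<noteq> 0\<close>] by blast
  define u where "u = r *s b + c"
  have cb: "br c b = q *s a" using bracket_swap_L1_L1[OF \<open>b \<in> L1\<close> \<open>c \<in> L1\<close>] bc by simp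
  have "u \<in> L1" unfolding u_def using \<open>b \<in> L1\<close> \<open>c \<in> L1\<close> subspace_L1
    by (meson subspace_add subspace_scale)
  have "br u u = (r * (r * p)) *s a + ((r * q) *s a + ((r * q) *s a + s *s a))"
    unfolding u_def
    by (simp only: bracket_add_left bracket_add_right bracket_scale_left bracket_scale_right
        bb bc cb cc scale_scale scale_right_distrib add.assoc)
  also have "\<dots> = (r * (r * p) + (r * q + (r * q + s))) *s a" by (simp only: scale_left_distrib)
  also have "r * (r * p) + (r * q + (r * q + s)) = p * r\<^sup>2 + (2 * q) * r + s" by algebra
  finally have "br u u = 0" using root by simp
  moreover have "br u b = (r * p + q) *s a" unfolding u_def by (simp add: bb cb algebra_simps)
  moreover have "r * p + q \<noteq> 0"
  proof
    assume "r * p + q = 0"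
    then have "q = - (r * p)" by (simp add: eq_neg_iff_add_eq_0 add.commute)
    moreover from this have "s = r * r * p" using root by (simp add: power2_eq_square algebra_simps)
    ultimately show False using det by (simp add: algebra_simps)
  qed
  moreover have "c \<in> span {u, b}"
    using span_diff[OF span_base span_scale[OF span_base]] unfolding u_def
    by (metis add_diff_cancel_left' insertCI)
  ultimately show thesis using that \<open>u \<in> L1\<close> by blast
qed

lemma even_line_central_if_no_odd_centre:
  assumes L0: "L0 = span {a}" and no_odd_centre: "\<forall>v\<in>L1. (\<forall>x. br v x = 0) \<longrightarrow> v = 0"
  shows "br a x = 0"
proof -
  obtain v :: 'v where "v \<noteq> 0" by (rule nonzero_vector_exists)
  then obtain z where "z \<noteq> 0" and "homogeneous z" and z_central: "\<And>x. br z x = 0"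
    using homogeneous_central_exists by metis
  then have "z \<in> L0" using no_odd_centre by blast
  then obtain t where "z = t *s a" using L0 span_singletonE by blast
  then have "t \<noteq> 0" using \<open>z \<noteq> 0\<close> by auto
  then have "br a x = inverse t *s br z x" using \<open>z = t *s a\<close> by simp
  then show ?thesis using z_central by simp
qed

lemma classification_1_2_no_odd_centre:
  assumes "alg_closed TYPE('a)" and L0: "L0 = span {a}" and L1: "L1 = span {b, c}"
    and span: "span {a, b, c} = UNIV"
    and no_odd_centre: "\<forall>v\<in>L1. (\<forall>x. br v x = 0) \<longrightarrow> v = 0"
  shows "iso_model scale L0 L1 br par12 (c_one 2 3 1)"
proof -
  have "a \<in> L0" and "b \<in> L1" and "c \<in> L1" using L0 L1 by (auto intro: span_base)
  have a_central: "br a x = 0" for x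
    using L0 no_odd_centre by (rule even_line_central_if_no_odd_centre)
  obtain p where bb: "br b b = p *s a"
    using bracket_L1_L1[OF \<open>b \<in> L1\<close> \<open>b \<in> L1\<close>] L0 span_singletonE by blast
  obtain q where bc: "br b c = q *s a"
    using bracket_L1_L1[OF \<open>b \<in> L1\<close> \<open>c \<in> L1\<close>] L0 span_singletonE by blast
  obtain s where cc: "br c c = s *s a"
    using bracket_L1_L1[OF \<open>c \<in> L1\<close> \<open>c \<in> L1\<close>] L0 span_singletonE by blast
  have det: "p * s \<noteq> q * q"
    using odd_bracket_form_nondegenerate[OF \<open>a \<in> L0\<close> a_central \<open>b \<in> L1\<close> \<open>c \<in> L1\<close> span
        no_odd_centre bb bc cc] .
  show ?thesis
  proof (cases "p = 0")
    case True
    then have "q \<noteq> 0" using det by auto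
    show ?thesis
      by (rule iso_model_1_2_hyperbolic[OF \<open>a \<in> L0\<close> a_central \<open>b \<in> L1\<close> \<open>c \<in> L1\<close> _ bc cc \<open>q \<noteq> 0\<close> span])
        (simp add: bb True)
  next
    case False
    then obtain u k where "u \<in> L1" and "br u u = 0" and "br u b = k *s a" and "k \<noteq> 0"
      and "c \<in> span {u, b}"
      using isotropic_odd_vector_exists[OF assms(1) \<open>b \<in> L1\<close> \<open>c \<in> L1\<close> bb bc cc _ det] by blast
    then have "{a, b, c} \<subseteq> span {a, u, b}"
      using span_mono[of "{u, b}" "{a, u, b}"] by (auto intro: span_base)
    then have "span {a, u, b} = UNIV" using span_eq_UNIV_if_spanned span by blast
    then show ?thesis
      by (rule iso_model_1_2_hyperbolic[OF \<open>a \<in> L0\<close> a_central \<open>u \<in> L1\<close> \<open>b \<in> L1\<close>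
          \<open>br u u = 0\<close> \<open>br u b = k *s a\<close> bb \<open>k \<noteq> 0\<close>])
  qed
qed

lemma classification_1_2:
  assumes "alg_closed TYPE('a)" and L0: "L0 = span {a}" and L1: "L1 = span {b, c}"
    and span: "span {a, b, c} = UNIV"
  shows "iso_model scale L0 L1 br par12 c_abelian \<or> iso_model scale L0 L1 br par12 (c_one 2 3 1)
       \<or> iso_model scale L0 L1 br par12 (c_one 1 2 3) \<or> iso_model scale L0 L1 br par12 (c_one 3 3 1)"
proof (cases "\<forall>v\<in>L1. (\<forall>x. br v x = 0) \<longrightarrow> v = 0")
  case True
  then show ?thesis using classification_1_2_no_odd_centre assms by blast
next
  case False
  then obtain z where "z \<in> L1" and "z \<noteq> 0" and z_central: "\<And>x. br z x = 0" by blast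
  then have "z \<in> span {b, c}" using L1 by simp
  then obtain d where "d \<in> {b, c}" and span_azd: "span {a, z, d} = UNIV"
    using span_exchange_pair[OF span] \<open>z \<noteq> 0\<close> by blast
  have "d \<in> L1" using \<open>d \<in> {b, c}\<close> L1 by (auto intro: span_base)
  then show ?thesis
    using classification_1_2_odd_centre[OF L0 \<open>z \<in> L1\<close> _ \<open>z \<noteq> 0\<close> z_central span_azd] by blast
qed

lemma classification:
  assumes "alg_closed TYPE('a)"
  shows "iso_model scale L0 L1 br par03 c_abelian
       \<or> iso_model scale L0 L1 br par12 c_abelian
       \<or> iso_model scale L0 L1 br par12 (c_one 2 3 1)
       \<or> iso_model scale L0 L1 br par12 (c_one 1 2 3)
       \<or> iso_model scale L0 L1 br par12 (c_one 3 3 1)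
       \<or> iso_model scale L0 L1 br par21 c_abelian
       \<or> iso_model scale L0 L1 br par21 (c_one 3 3 2)
       \<or> iso_model scale L0 L1 br par30 c_abelian
       \<or> iso_model scale L0 L1 br par30 (c_one 1 2 3)"
proof -
  obtain B0 B1 where "finite B0" and "finite B1" and "B0 \<subseteq> L0" and "B1 \<subseteq> L1"
    and L0: "span B0 = L0" and L1: "span B1 = L1" and span: "span (B0 \<union> B1) = UNIV"
    and card: "card B0 + card B1 = 3"
    by (rule homogeneous_basis_exists)
  consider "card B0 = 3" "card B1 = 0" | "card B0 = 2" "card B1 = 1" | "card B0 = 1" "card B1 = 2"
    | "card B0 = 0" "card B1 = 3"
    using card by linarith
  then show ?thesis
  proof cases
    case 1
    then obtain x y z where "B0 = {x, y, z}" and "B1 = {}"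
      using \<open>finite B1\<close> by (auto simp: card_3_iff)
    then show ?thesis using classification_3_0[of x y z] L1 span by simp
  next
    case 2
    then obtain a b c where "B0 = {a, b}" and "B1 = {c}" by (auto simp: card_2_iff card_1_singleton_iff)
    then show ?thesis using classification_2_1[of a b c] L0 L1 span by (auto simp: insert_commute)
  next
    case 3
    then obtain a b c where "B0 = {a}" and "B1 = {b, c}" by (auto simp: card_2_iff card_1_singleton_iff)
    then show ?thesis using classification_1_2[OF assms, of a b c] L0 L1 span by (auto simp: insert_commute)
  next
    case 4
    then obtain x y z where "B0 = {}" and "B1 = {x, y, z}"
      using \<open>finite B0\<close> by (auto simp: card_3_iff)
    then show ?thesis using classification_0_3[of x y z] \<open>B1 \<subseteq> L1\<close> L0 span by simp
  qed
qed

end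

theorem mainTheorem5:
  fixes scale :: "'a::field \<Rightarrow> 'v::ab_group_add \<Rightarrow> 'v"
    and L0 L1 :: "'v set" and br :: "'v \<Rightarrow> 'v \<Rightarrow> 'v"
  assumes "alg_closed TYPE('a)"
    and "CHAR('a) \<ge> 3"
    and "lie_superalgebra scale L0 L1 br"
    and "nilpotent_lsa scale br"
    and "total_dim scale 3"
  shows "iso_model scale L0 L1 br par03 c_abelian
       \<or> iso_model scale L0 L1 br par12 c_abelian
       \<or> iso_model scale L0 L1 br par12 (c_one 2 3 1)
       \<or> iso_model scale L0 L1 br par12 (c_one 1 2 3)
       \<or> iso_model scale L0 L1 br par12 (c_one 3 3 1)
       \<or> iso_model scale L0 L1 br par21 c_abelian
       \<or> iso_model scale L0 L1 br par21 (c_one 3 3 2)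
       \<or> iso_model scale L0 L1 br par30 c_abelian
       \<or> iso_model scale L0 L1 br par30 (c_one 1 2 3)"
proof -
  interpret lie_superalg scale L0 L1 br
    using assms(3) by unfold_locales
  obtain B where "finite B" and "card B = 3" and "independent B" and "span B = UNIV"
    using assms(5) unfolding total_dim_def by blast
  then interpret nilpotent_lie_superalg_dim3 scale L0 L1 br B
    using assms(4) two_neq_zero_if_CHAR_ge_3[OF assms(2)] by unfold_locales
  show ?thesis using classification[OF assms(1)] .
qed

end
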